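(* Consider the recursive network formation model with the utility function described in the context. If $$c<b_1-b_2 \quad\text{and}\quad c_0\le(1-\gamma)b_2,$$ then the resulting topology is a complete graph: starting from a single node, for every $n\ge1$, the pairwise stable network reached after the $n$-th node has entered is the complete graph on $n$ nodes, irrespective of the random order in which nodes are selected to move.
   Context: Networks are finite simple undirected graphs whose vertices (nodes) are self-interested agents. Parameters: benefits $b_1>b_2>b_3>b_4>\dots>0$, where $b_i$ is the benefit a node obtains from a node at distance $i$; a link cost $c$ per immediate neighbor; an intermediation fraction $\gamma$ with $0\le\gamma<1$; and a network entry factor $c_0$. Notation: $N$ is the set of nodes currently in the network, $d_j$ the degree of $j$, and $l(j,w)$ the graph distance. A node $x$ is essential for a pair $y,z$ (with $x\notin\{y,z\}$) if $x$ lies on every path joining $y$ and $z$. Write $E(y,z)$ for the set of nodes essential for $y,z$ and $e(y,z)=|E(y,z)|$. Only pairs joined by a path contribute to the sums below. Utility of node $j$ in network $g$: $$u_j(g)=-c_0\,d_{T(j)}\mathbf 1_{\{j=\mathrm{NE}\}}+d_j(b_1-c)+\sum_{w\in N,\ l(j,w)>1}b_{l(j,w)}-\sum_{w\in N,\ E(j,w)\ne\emptyset}\gamma\, b_{l(j,w)}+\sum_{y,z\in N,\ j\in E(y,z)}\frac{\gamma}{e(y,z)}\,2\,b_{l(y,z)}.$$ Here $\mathbf 1_{\{j=\mathrm{NE}\}}=1$ exactly when $j$ is a newly entering node evaluating the creation of its first link. $T(j)$ is the existing node to which $j$ forms that first link, and $d_{T(j)}$ is that node's degree before the link. The network before entry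 gives the entering node utility $0$. Pairwise stability: $g$ is pairwise stable if (a) for every link $(i,j)\in g$, $u_i(g\setminus\{(i,j)\})\le u_i(g)$ and $u_j(g\setminus\{(i,j)\})\le u_j(g)$; and (b) for every non-link $(i,j)\notin g$, if $u_i(g\cup\{(i,j)\})>u_i(g)$ then $u_j(g\cup\{(i,j)\})<u_j(g)$. Recursive model of network formation: - The process starts with a single node. - When the current network of $n-1$ nodes is pairwise stable, a new node considers entering. Its options are to stay out or to propose a link to one existing node. The link forms iff the receiving node's utility does not decrease. No existing node can link to the newcomer before it has formed this first link. - After entry, nodes are repeatedly chosen at random to move. A chosen node plays a myopic best response among three options: create a link with a non-neighbor (the link forms only if the other node's utility does not decrease, which the proposer anticipates); delete a link with a neighbor (unilaterally); or keep the status quo. It alters a link only if this strictly increases its current utility. - This continues until the network is pairwise stable; then the next node considers entering, and so on. "The resulting topology is X" means: for every number $n$ of nodes, every pairwise stable network reached after the $n$-th node has entered is a network of topology X on $n$ nodes, irrespective of the random choices. *)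

theory Defs
  imports Main Complex_Main
begin

(* Networks: nodes are natural numbers; the node set is an explicit finite set N
   (in the recursive model N = {..<n}, node k being the (k+1)-th entrant).
   A network is a set of undirected edges, each edge a two-element set {x,y}. *)

definition adj :: "nat set set \<Rightarrow> nat \<Rightarrow> nat \<Rightarrow> bool" where
  "adj g x y \<longleftrightarrow> x \<noteq> y \<and> {x, y} \<in> g"

definition deg :: "nat set \<Rightarrow> nat set set \<Rightarrow> nat \<Rightarrow> nat" where
  "deg N g j = card {k \<in> N. adj g j k}"

definition is_path :: "nat set \<Rightarrow> nat set set \<Rightarrow> nat \<Rightarrow> nat \<Rightarrow> nat list \<Rightarrow> bool" where
  "is_path N g y z xs \<longleftrightarrow> xs \<noteq> [] \<and> hd xs = y \<and> last xs = z \<and> distinct xs \<and> set xs \<subseteq> N \<and>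
     (\<forall>i. Suc i < length xs \<longrightarrow> adj g (xs ! i) (xs ! Suc i))"

definition joined :: "nat set \<Rightarrow> nat set set \<Rightarrow> nat \<Rightarrow> nat \<Rightarrow> bool" where
  "joined N g y z \<longleftrightarrow> (\<exists>xs. is_path N g y z xs)"

definition gdist :: "nat set \<Rightarrow> nat set set \<Rightarrow> nat \<Rightarrow> nat \<Rightarrow> nat" where
  "gdist N g y z = (LEAST k. \<exists>xs. is_path N g y z xs \<and> length xs = Suc k)"

definition essential :: "nat set \<Rightarrow> nat set set \<Rightarrow> nat \<Rightarrow> nat \<Rightarrow> nat \<Rightarrow> bool" where
  "essential N g x y z \<longleftrightarrow> x \<in> N \<and> x \<noteq> y \<and> x \<noteq> z \<and> (\<forall>xs. is_path N g y z xs \<longrightarrow> x \<in> set xs)"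

definition ess_set :: "nat set \<Rightarrow> nat set set \<Rightarrow> nat \<Rightarrow> nat \<Rightarrow> nat set" where
  "ess_set N g y z = {x. essential N g x y z}"

(* utility u_j(g) without the entry term (the entry term is added separately
   in the entry step of the process); b i = b_i, c = link cost, gam = gamma *)
definition util :: "(nat \<Rightarrow> real) \<Rightarrow> real \<Rightarrow> real \<Rightarrow> nat set \<Rightarrow> nat set set \<Rightarrow> nat \<Rightarrow> real" where
  "util b c gam N g j =
      real (deg N g j) * (b 1 - c)
    + (\<Sum>w\<in>{w\<in>N. joined N g j w \<and> gdist N g j w > 1}. b (gdist N g j w))
    - (\<Sum>w\<in>{w\<in>N. w \<noteq> j \<and> joined N g j w \<and> ess_set N g j w \<noteq> {}}. gam * b (gdist N g j w))
    + (\<Sum>(y, z)\<in>{(y, z). y \<in> N \<and> z \<in> N \<and> y < z \<and> joined N g y z \<and> j \<in> ess_set N g y z}.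
          gam / real (card (ess_set N g y z)) * 2 * b (gdist N g y z))"

definition pairwise_stable :: "(nat \<Rightarrow> real) \<Rightarrow> real \<Rightarrow> real \<Rightarrow> nat set \<Rightarrow> nat set set \<Rightarrow> bool" where
  "pairwise_stable b c gam N g \<longleftrightarrow>
     (\<forall>i\<in>N. \<forall>k\<in>N. adj g i k \<longrightarrow>
        util b c gam N (g - {{i, k}}) i \<le> util b c gam N g i \<and>
        util b c gam N (g - {{i, k}}) k \<le> util b c gam N g k) \<and>
     (\<forall>i\<in>N. \<forall>k\<in>N. i \<noteq> k \<and> \<not> adj g i k \<longrightarrow>
        util b c gam N (insert {i, k} g) i > util b c gam N g i \<longrightarrow>
        util b c gam N (insert {i, k} g) k < util b c gam N g k)"

definition options :: "(nat \<Rightarrow> real) \<Rightarrow> real \<Rightarrow> real \<Rightarrow> nat set \<Rightarrow> nat set set \<Rightarrow> nat \<Rightarrow> nat set set set" where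
  "options b c gam N g i =
     {insert {i, k} g | k. k \<in> N \<and> k \<noteq> i \<and> \<not> adj g i k \<and>
                           util b c gam N (insert {i, k} g) k \<ge> util b c gam N g k}
   \<union> {g - {{i, k}} | k. k \<in> N \<and> adj g i k}
   \<union> {g}"

definition accepts :: "(nat \<Rightarrow> real) \<Rightarrow> real \<Rightarrow> real \<Rightarrow> nat \<Rightarrow> nat set set \<Rightarrow> nat \<Rightarrow> bool" where
  "accepts b c gam n g T \<longleftrightarrow>
     util b c gam {..<Suc n} (insert {n, T} g) T \<ge> util b c gam {..<Suc n} g T"

(* utility of the entrant n after forming its first link with T, including the
   entry term - c0 * d_T (degree of T before the link) *)
definition entry_val :: "(nat \<Rightarrow> real) \<Rightarrow> real \<Rightarrow> real \<Rightarrow> real \<Rightarrow> nat \<Rightarrow> nat set set \<Rightarrow> nat \<Rightarrow> real" where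
  "entry_val b c gam c0 n g T =
     util b c gam {..<Suc n} (insert {n, T} g) n - c0 * real (deg {..<n} g T)"

(* one step of the recursive formation process; states are (number of nodes, network) *)
inductive step :: "(nat \<Rightarrow> real) \<Rightarrow> real \<Rightarrow> real \<Rightarrow> real \<Rightarrow> nat \<times> nat set set \<Rightarrow> nat \<times> nat set set \<Rightarrow> bool"
  for b c gam c0 where
  entry: "\<lbrakk> pairwise_stable b c gam {..<n} g; T < n; accepts b c gam n g T;
            entry_val b c gam c0 n g T > 0;
            \<forall>T'<n. accepts b c gam n g T' \<longrightarrow> entry_val b c gam c0 n g T' \<le> entry_val b c gam c0 n g T \<rbrakk>
          \<Longrightarrow> step b c gam c0 (n, g) (Suc n, insert {n, T} g)"
| move: "\<lbrakk> \<not> pairwise_stable b c gam {..<n} g; i < n; g' \<in> options b c gam {..<n} g i;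
           util b c gam {..<n} g' i > util b c gam {..<n} g i;
           \<forall>g''\<in>options b c gam {..<n} g i. util b c gam {..<n} g'' i \<le> util b c gam {..<n} g' i \<rbrakk>
          \<Longrightarrow> step b c gam c0 (n, g) (n, g')"

definition complete_graph :: "nat \<Rightarrow> nat set set" where
  "complete_graph n = {{x, y} | x y. x < n \<and> y < n \<and> x \<noteq> y}"

end

theory Submission
  imports Defs
begin

(* When c < b_1 - b_2, linking to a non-neighbour k strictly raises a node's
   utility, whatever the network: k's contribution rises from at most b_2 (k was at distance
   at least 2, possibly discounted by intermediation) to b_1 - c, no other node's contribution
   falls (distances shrink, essential sets shrink), and the intermediation income cannot fall
   (a node stays essential for every pair it was essential for, now shared among fewer
   essential nodes, and distances shrink).  Hence both endpoints of a missing link strictly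
   want it, so a pairwise stable network on {..<n} contains every link of the complete graph.
   Conversely every step of the formation process keeps the network inside the complete
   graph on its current node set.  The entry condition on c0 plays no
   role: it only guarantees that entry actually happens. *)

section \<open>Paths and distances\<close>

lemma path_mono:
  assumes "is_path N g y z xs" "\<And>u v. adj g u v \<Longrightarrow> adj g' u v"
  shows "is_path N g' y z xs"
  using assms unfolding is_path_def by blast

lemma joined_mono:
  assumes "joined N g y z" "\<And>u v. adj g u v \<Longrightarrow> adj g' u v"
  shows "joined N g' y z"
  using assms path_mono unfolding joined_def by blast

lemma gdist_ex:
  assumes "joined N g y z"
  shows "\<exists>xs. is_path N g y z xs \<and> length xs = Suc (gdist N g y z)"
proof -
  from assms obtain xs where p: "is_path N g y z xs" unfolding joined_def by blast
  then have "xs \<noteq> []" unfolding is_path_def by auto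
  then obtain m where "length xs = Suc m" by (cases xs) auto
  with p have "\<exists>k xs. is_path N g y z xs \<and> length xs = Suc k" by blast
  then show ?thesis unfolding gdist_def by (rule LeastI_ex)
qed

lemma gdist_le:
  assumes "is_path N g y z xs" "length xs = Suc m"
  shows "gdist N g y z \<le> m"
  unfolding gdist_def using assms by (intro Least_le) blast

lemma gdist_mono:
  assumes "joined N g y z" "\<And>u v. adj g u v \<Longrightarrow> adj g' u v"
  shows "gdist N g' y z \<le> gdist N g y z"
proof -
  obtain xs where "is_path N g y z xs" "length xs = Suc (gdist N g y z)"
    using gdist_ex[OF assms(1)] by blast
  then show ?thesis using gdist_le path_mono[OF _ assms(2)] by blast
qed

lemma gdist_self: "j \<in> N \<Longrightarrow> gdist N g j j = 0"
  using gdist_le[of N g j j "[j]" 0] unfolding is_path_def by auto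

lemma gdist_ge1:
  assumes "joined N g y z" "y \<noteq> z"
  shows "gdist N g y z \<ge> 1"
proof (rule ccontr)
  assume "\<not> ?thesis"
  with gdist_ex[OF assms(1)] obtain xs where "is_path N g y z xs" "length xs = 1" by auto
  then show False using assms(2) unfolding is_path_def
    by (metis One_nat_def hd_conv_nth last_conv_nth diff_Suc_1 length_0_conv zero_neq_one)
qed

lemma gdist_ge2:
  assumes "joined N g y z" "y \<noteq> z" "\<not> adj g y z"
  shows "gdist N g y z \<ge> 2"
proof (rule ccontr)
  assume "\<not> ?thesis"
  with gdist_ge1[OF assms(1,2)] have "gdist N g y z = 1" by simp
  with gdist_ex[OF assms(1)] obtain xs where p: "is_path N g y z xs" "length xs = 2" by auto
  then have "xs ! 0 = y" "xs ! 1 = z" unfolding is_path_def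
    by (auto simp: hd_conv_nth last_conv_nth)
  moreover have "adj g (xs ! 0) (xs ! Suc 0)" using p unfolding is_path_def by auto
  ultimately show False using assms(3) by simp
qed

lemma path_edge:
  assumes "adj g y z" "y \<in> N" "z \<in> N"
  shows "is_path N g y z [y, z]"
  using assms unfolding is_path_def adj_def by (auto simp: less_Suc_eq)

lemma adj_gdist:
  assumes "adj g y z" "y \<in> N" "z \<in> N"
  shows "gdist N g y z = 1"
proof -
  have "gdist N g y z \<le> 1" using gdist_le[OF path_edge[OF assms]] by simp
  moreover have "joined N g y z" using path_edge[OF assms] unfolding joined_def by blast
  moreover have "y \<noteq> z" using assms(1) unfolding adj_def by simp
  ultimately show ?thesis using gdist_ge1 by fastforce
qed

lemma adj_ess:
  assumes "adj g y z" "y \<in> N" "z \<in> N"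
  shows "ess_set N g y z = {}"
  using path_edge[OF assms] unfolding ess_set_def essential_def by fastforce

lemma ess_mono:
  assumes "\<And>u v. adj g u v \<Longrightarrow> adj g' u v"
  shows "ess_set N g' y z \<subseteq> ess_set N g y z"
  using path_mono[OF _ assms] unfolding ess_set_def essential_def by blast

lemma ess_finite: "finite N \<Longrightarrow> finite (ess_set N g y z)"
  unfolding ess_set_def essential_def by (rule finite_subset[of _ N]) auto

text \<open>A node stays essential for a pair when it adds a link of its own: every new path
  either avoids the new link (an old path, through j) or uses it (so passes through j).\<close>

lemma ess_keep:
  assumes "j \<in> ess_set N g y z"
  shows "j \<in> ess_set N (insert {j, k} g) y z"
proof -
  have "j \<in> set xs" if p: "is_path N (insert {j, k} g) y z xs" for xs
  proof (cases "\<forall>i. Suc i < length xs \<longrightarrow> adj g (xs ! i) (xs ! Suc i)")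
    case True
    then have "is_path N g y z xs" using p unfolding is_path_def by auto
    then show ?thesis using assms unfolding ess_set_def essential_def by auto
  next
    case False
    then obtain i where i: "Suc i < length xs" "\<not> adj g (xs ! i) (xs ! Suc i)" by auto
    then have "adj (insert {j, k} g) (xs ! i) (xs ! Suc i)" using p unfolding is_path_def by auto
    with i have "{xs ! i, xs ! Suc i} = {j, k}" unfolding adj_def by auto
    then have "j = xs ! i \<or> j = xs ! Suc i" by (metis doubleton_eq_iff)
    then show ?thesis using i(1) by (metis Suc_lessD nth_mem)
  qed
  then show ?thesis using assms unfolding ess_set_def essential_def by auto
qed

section \<open>Decomposition of the utility\<close>

text \<open>What node w contributes to j's utility: the net value b_1 - c of a direct link, or the
  indirect benefit b_l, reduced by the factor 1 - gam if intermediaries must be paid.\<close>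

definition contrib :: "(nat \<Rightarrow> real) \<Rightarrow> real \<Rightarrow> real \<Rightarrow> nat set \<Rightarrow> nat set set \<Rightarrow> nat \<Rightarrow> nat \<Rightarrow> real" where
  "contrib b c gam N g j w =
     (if w = j then 0 else if adj g j w then b 1 - c
      else if joined N g j w then
        (if ess_set N g j w \<noteq> {} then (1 - gam) * b (gdist N g j w) else b (gdist N g j w))
      else 0)"

definition brokerage :: "(nat \<Rightarrow> real) \<Rightarrow> real \<Rightarrow> nat set \<Rightarrow> nat set set \<Rightarrow> nat \<Rightarrow> real" where
  "brokerage b gam N g j =
     (\<Sum>(y, z)\<in>{(y, z). y \<in> N \<and> z \<in> N \<and> y < z \<and> joined N g y z \<and> j \<in> ess_set N g y z}.
        gam / real (card (ess_set N g y z)) * 2 * b (gdist N g y z))"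

lemma contrib_eq_terms:
  assumes "j \<in> N" "w \<in> N"
  shows "(if adj g j w then 1 else 0) * (b 1 - c)
      + (if joined N g j w \<and> gdist N g j w > 1 then b (gdist N g j w) else 0)
      - (if w \<noteq> j \<and> joined N g j w \<and> ess_set N g j w \<noteq> {} then gam * b (gdist N g j w) else 0)
      = contrib b c gam N g j w"
proof -
  consider "w = j" | "w \<noteq> j" "adj g j w" | "w \<noteq> j" "\<not> adj g j w" "joined N g j w"
    | "w \<noteq> j" "\<not> adj g j w" "\<not> joined N g j w" by blast
  then show ?thesis
  proof cases
    case 1 then show ?thesis using gdist_self[OF assms(1)] unfolding contrib_def adj_def by simp
  next
    case 2 then show ?thesis using adj_gdist[OF _ assms] adj_ess[OF _ assms]
        unfolding contrib_def by simp
  next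
    case 3 then have "gdist N g j w \<ge> 2" using gdist_ge2 by metis
    with 3 show ?thesis unfolding contrib_def by (simp add: algebra_simps)
  next
    case 4 then show ?thesis unfolding contrib_def by simp
  qed
qed

lemma util_split:
  assumes "finite N" "j \<in> N"
  shows "util b c gam N g j = (\<Sum>w\<in>N. contrib b c gam N g j w) + brokerage b gam N g j"
proof -
  have deg: "real (deg N g j) = (\<Sum>w\<in>N. if adj g j w then 1 else 0)"
    unfolding deg_def using assms(1) by (simp add: sum.inter_filter[symmetric])
  have "util b c gam N g j - brokerage b gam N g j
    = (\<Sum>w\<in>N. (if adj g j w then 1 else 0) * (b 1 - c)
      + (if joined N g j w \<and> gdist N g j w > 1 then b (gdist N g j w) else 0)
      - (if w \<noteq> j \<and> joined N g j w \<and> ess_set N g j w \<noteq> {} then gam * b (gdist N g j w) else 0))"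
    unfolding util_def brokerage_def deg sum.inter_filter[OF assms(1)]
    by (simp add: sum_distrib_right sum_subtractf sum.distrib)
  also have "\<dots> = (\<Sum>w\<in>N. contrib b c gam N g j w)"
    using contrib_eq_terms[OF assms(2)] by (rule sum.cong[OF refl])
  finally show ?thesis by simp
qed

section \<open>Adding a link is strictly profitable\<close>

lemma benefit_antitone:
  assumes "\<forall>i\<ge>1. b (Suc i) < (b i :: real)" "1 \<le> m" "m \<le> n"
  shows "b n \<le> b m"
  using assms(3)
proof (induction n rule: dec_induct)
  case (step k)
  then have "b (Suc k) < b k" using assms(1,2) by simp
  then show ?case using step.IH by simp
qed simp

locale benefits =
  fixes b :: "nat \<Rightarrow> real" and c gam :: real
  assumes b_anti: "\<And>m n. 1 \<le> m \<Longrightarrow> m \<le> n \<Longrightarrow> b n \<le> b m"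
    and b_pos: "\<And>i. 1 \<le> i \<Longrightarrow> 0 < b i"
    and gam: "0 \<le> gam" "gam \<le> 1"
    and c_le: "c \<le> b 1"
begin

lemma contrib_nonneg: "0 \<le> contrib b c gam N g j w"
proof -
  have "joined N g j w \<Longrightarrow> w \<noteq> j \<Longrightarrow> 0 < b (gdist N g j w)" using gdist_ge1 b_pos by blast
  then show ?thesis unfolding contrib_def using gam c_le by auto
qed

text \<open>A node's contribution to j does not fall when links are added, unless it becomes a
  neighbour of j (the link cost may then exceed the indirect benefit).\<close>

lemma contrib_mono:
  assumes am: "\<And>u v. adj g u v \<Longrightarrow> adj g' u v"
    and same: "adj g' j w = adj g j w"
  shows "contrib b c gam N g j w \<le> contrib b c gam N g' j w"
proof (cases "w \<noteq> j \<and> \<not> adj g j w \<and> joined N g j w")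
  case True
  then have nw: "w \<noteq> j" "\<not> adj g j w" "joined N g j w" by auto
  have jn: "joined N g' j w" using joined_mono[OF nw(3) am] .
  have d1: "1 \<le> gdist N g' j w" using gdist_ge1[OF jn nw(1)[symmetric]] .
  have bb: "b (gdist N g j w) \<le> b (gdist N g' j w)" using b_anti[OF d1 gdist_mono[OF nw(3) am]] .
  have bp: "0 < b (gdist N g' j w)" using b_pos[OF d1] .
  have es: "ess_set N g' j w \<subseteq> ess_set N g j w" by (rule ess_mono) (rule am)
  have "(1 - gam) * b (gdist N g j w) \<le> (1 - gam) * b (gdist N g' j w)"
    using bb gam by (intro mult_left_mono) auto
  moreover have "(1 - gam) * b (gdist N g' j w) \<le> b (gdist N g' j w)" using gam bp by simp
  ultimately show ?thesis using nw jn same es bb unfolding contrib_def by auto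
next
  case unreached: False
  show ?thesis
  proof (cases "w \<noteq> j \<and> adj g j w")
    case True then show ?thesis using same unfolding contrib_def by simp
  next
    case False
    with unreached have "contrib b c gam N g j w = 0" unfolding contrib_def by auto
    then show ?thesis using contrib_nonneg by simp
  qed
qed

lemma contrib_nonadj_le:
  assumes "j \<noteq> k" "\<not> adj g j k"
  shows "contrib b c gam N g j k \<le> b 2"
proof (cases "joined N g j k")
  case True
  have d2: "2 \<le> gdist N g j k" using gdist_ge2[OF True assms] .
  have "b (gdist N g j k) \<le> b 2" using b_anti[OF _ d2] by simp
  moreover have "0 < b (gdist N g j k)" using b_pos d2 by auto
  ultimately show ?thesis using True assms gam unfolding contrib_def
    by (auto intro: order_trans[of _ "b (gdist N g j k)"])
next
  case False then show ?thesis using assms b_pos[of 2] unfolding contrib_def by auto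
qed

text \<open>Brokerage income does not fall when j adds a link: j keeps being essential for the
  same pairs (and possibly more), shared among fewer essential nodes, at shorter distances.\<close>

lemma brokerage_mono:
  assumes N: "finite N"
  shows "brokerage b gam N g j \<le> brokerage b gam N (insert {j, k} g) j"
proof -
  define g' where "g' = insert {j, k} g"
  have am: "\<And>u v. adj g u v \<Longrightarrow> adj g' u v" unfolding g'_def adj_def by auto
  define P where "P h = {(y, z). y \<in> N \<and> z \<in> N \<and> y < z \<and> joined N h y z \<and> j \<in> ess_set N h y z}" for h
  define t where "t h = (\<lambda>(y, z). gam / real (card (ess_set N h y z)) * 2 * b (gdist N h y z))" for h
  have PP: "P g \<subseteq> P g'" unfolding P_def using joined_mono[OF _ am] ess_keep
    unfolding g'_def by auto
  have finP: "finite (P g')" unfolding P_def by (rule finite_subset[of _ "N \<times> N"]) (use N in auto)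
  have tnn: "0 \<le> t g' p" if "p \<in> P g'" for p
  proof -
    obtain y z where p: "p = (y, z)" by (cases p)
    with that have "joined N g' y z" "y \<noteq> z" unfolding P_def by auto
    then have "0 < b (gdist N g' y z)" using gdist_ge1 b_pos by blast
    then show ?thesis unfolding t_def p using gam by simp
  qed
  have tle: "t g p \<le> t g' p" if "p \<in> P g" for p
  proof -
    obtain y z where p: "p = (y, z)" by (cases p)
    with that have yz: "joined N g y z" "y \<noteq> z" "j \<in> ess_set N g y z" unfolding P_def by auto
    have d1: "1 \<le> gdist N g' y z" using gdist_ge1[OF joined_mono[OF yz(1) am] yz(2)] .
    have bb: "b (gdist N g y z) \<le> b (gdist N g' y z)" using b_anti[OF d1 gdist_mono[OF yz(1) am]] .
    have bp: "0 < b (gdist N g y z)" using gdist_ge1[OF yz(1,2)] b_pos by auto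
    have cpos: "0 < card (ess_set N g' y z)"
      using ess_keep[OF yz(3)] ess_finite[OF N] card_gt_0_iff unfolding g'_def by blast
    have cle: "card (ess_set N g' y z) \<le> card (ess_set N g y z)"
      using card_mono[OF ess_finite[OF N] ess_mono[OF am]] .
    have "gam / real (card (ess_set N g y z)) \<le> gam / real (card (ess_set N g' y z))"
      using cpos cle gam by (intro divide_left_mono) auto
    moreover have "0 \<le> gam / real (card (ess_set N g' y z))" using gam by simp
    ultimately have "gam / real (card (ess_set N g y z)) * 2 * b (gdist N g y z)
        \<le> gam / real (card (ess_set N g' y z)) * 2 * b (gdist N g' y z)"
      using bb bp gam by (intro mult_mono) auto
    then show ?thesis unfolding t_def p by simp
  qed
  have "sum (t g) (P g) \<le> sum (t g') (P g)" using tle by (rule sum_mono)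
  also have "\<dots> \<le> sum (t g') (P g')" using finP PP tnn by (intro sum_mono2) auto
  finally show ?thesis unfolding brokerage_def P_def t_def g'_def .
qed

lemma add_link_profitable:
  assumes hc: "c < b 1 - b 2"
    and N: "finite N" "j \<in> N" "k \<in> N" "j \<noteq> k" "\<not> adj g j k"
  shows "util b c gam N g j < util b c gam N (insert {j, k} g) j"
proof -
  define g' where "g' = insert {j, k} g"
  have am: "\<And>u v. adj g u v \<Longrightarrow> adj g' u v" unfolding g'_def adj_def by auto
  have gain_k: "contrib b c gam N g j k < contrib b c gam N g' j k"
  proof -
    have "contrib b c gam N g' j k = b 1 - c" using N unfolding contrib_def g'_def adj_def by auto
    then show ?thesis using contrib_nonadj_le[OF N(4,5), of N] hc by simp
  qed
  have "contrib b c gam N g j w \<le> contrib b c gam N g' j w" if "w \<in> N" for w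
  proof (cases "w = k")
    case False
    then have "adj g' j w = adj g j w" unfolding g'_def adj_def by (auto simp: doubleton_eq_iff)
    then show ?thesis using contrib_mono[OF am] by blast
  qed (use gain_k in simp)
  then have "(\<Sum>w\<in>N. contrib b c gam N g j w) < (\<Sum>w\<in>N. contrib b c gam N g' j w)"
    using gain_k N(3) by (intro sum_strict_mono_ex1[OF N(1)]) auto
  then show ?thesis
    using brokerage_mono[OF N(1), of g j k] util_split[OF N(1,2)] unfolding g'_def by simp
qed

text \<open>Hence both endpoints of a missing link want it, and pairwise stable networks
  contain every possible link.\<close>

lemma stable_contains_complete:
  assumes hc: "c < b 1 - b 2"
    and stable: "pairwise_stable b c gam {..<n} g"
  shows "complete_graph n \<subseteq> g"
proof
  fix e assume "e \<in> complete_graph n"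
  then obtain x y where e: "e = {x, y}" "x < n" "y < n" "x \<noteq> y" unfolding complete_graph_def by blast
  show "e \<in> g"
  proof (rule ccontr)
    assume "e \<notin> g"
    then have na: "\<not> adj g x y" "\<not> adj g y x" unfolding adj_def e by (auto simp: insert_commute)
    have "util b c gam {..<n} g x < util b c gam {..<n} (insert {x, y} g) x"
      using add_link_profitable[OF hc _ _ _ e(4) na(1)] e by simp
    moreover have "util b c gam {..<n} g y < util b c gam {..<n} (insert {x, y} g) y"
      using add_link_profitable[OF hc _ _ _ e(4)[symmetric] na(2)] e by (simp add: insert_commute)
    ultimately show False using stable e na unfolding pairwise_stable_def by force
  qed
qed

end

lemma step_within_complete:
  assumes "step b c gam c0 (n, g) (n', g')" and within: "g \<subseteq> complete_graph n"
  shows "g' \<subseteq> complete_graph n'"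
  using assms(1)
proof cases
  case (entry T)
  then have n': "n' = Suc n" and g': "g' = insert {n, T} g" and T: "T < n" by simp_all
  have "complete_graph n \<subseteq> complete_graph (Suc n)" unfolding complete_graph_def by force
  moreover have "{n, T} \<in> complete_graph (Suc n)" using T unfolding complete_graph_def by force
  ultimately show ?thesis using n' g' within by auto
next
  case (move i)
  then have n': "n' = n" and i: "i < n" and opt: "g' \<in> options b c gam {..<n} g i" by simp_all
  from opt consider k where "g' = insert {i, k} g" "k < n" "k \<noteq> i" | "g' \<subseteq> g"
    unfolding options_def by blast
  then show ?thesis
  proof cases
    case 1
    then have "{i, k} \<in> complete_graph n" using i unfolding complete_graph_def by blast
    then show ?thesis using 1(1) within n' by simp
  next
    case 2 then show ?thesis using within n' by simp
  qed
qed

lemma reachable_within_complete: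
  assumes "(step b c gam c0)\<^sup>*\<^sup>* (1, {}) (n, g)"
  shows "g \<subseteq> complete_graph n"
  using assms
proof (induction "(n, g)" arbitrary: n g rule: rtranclp_induct)
  case (step s n g)
  obtain n0 g0 where s: "s = (n0, g0)" by (cases s)
  show ?case using step_within_complete step.hyps(2) step.hyps(3)[OF s] unfolding s .
qed simp

theorem theorem2:
  fixes b :: "nat \<Rightarrow> real" and c gam c0 :: real and n :: nat and g :: "nat set set"
  assumes b_decr: "\<forall>i\<ge>1. b (Suc i) < b i"
    and b_pos: "\<forall>i\<ge>1. 0 < b i"
    and gam: "0 \<le> gam" "gam < 1"
    and hc: "c < b 1 - b 2"
    and hc0: "c0 \<le> (1 - gam) * b 2"
    and reach: "(step b c gam c0)\<^sup>*\<^sup>* (1, {}) (n, g)"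
    and stable: "pairwise_stable b c gam {..<n} g"
  shows "g = complete_graph n"
proof -
  have "benefits b c gam"
  proof
    have "0 < b 2" using b_pos by simp
    then show "c \<le> b 1" using hc by linarith
  qed (use benefit_antitone[OF b_decr] b_pos gam in auto)
  then have "complete_graph n \<subseteq> g"
    using benefits.stable_contains_complete[OF _ hc stable] by blast
  then show ?thesis using reachable_within_complete[OF reach] by blast
qed

end
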